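(* Let $d\geqslant2$ and let $\mu$ be a Borel probability measure on $GL(d,\mathbb R)$. Assume either that (A1), (A2) hold and $s\in I_\mu^+$, or that (A1), (A2), (A3) hold and $s\in(-s_0,0)$, where $s_0>0$ is a sufficiently small constant (depending on $\mu$). Then for every $y\in(\mathbb P^{d-1})^*$ and every bounded measurable function $\varphi$ on $\mathbb P^{d-1}$, $$\upsilon_s^y(\varphi)=\int_{GL(d,\mathbb R)} g\upsilon_s^{g^*y}(\varphi)\,q_s^*(g,y)\,\mu(dg).$$
   Context: For $x=\mathbb Rv\in\mathbb P^{d-1}$, $y=\mathbb Rf\in(\mathbb P^{d-1})^*$: $\delta(x,y)=\frac{|\langle f,v\rangle|}{|f||v|}$, $\sigma(g,x)=\log\frac{|gv|}{|v|}$, $\sigma(g^*,y)=\log\frac{|g^*f|}{|f|}$ with $g^*$ the adjoint of $g$ acting on $(\mathbb P^{d-1})^*$. $I_\mu^+=\{s\geqslant0:\int\|g\|^s\mu(dg)<\infty\}$. $P_s\varphi(x)=\int e^{s\sigma(g,x)}\varphi(gx)\mu(dg)$. $\Gamma_\mu$ is the smallest closed subsemigroup containing $\operatorname{supp}\mu$; (A1): no finite union of proper subspaces of $\mathbb R^d$ is $\Gamma_\mu$-invariant; (A2): $\Gamma_\mu$ contains a matrix with an algebraically simple eigenvalue of modulus strictly larger than all others; (A3): $\int N(g)^\alpha\mu(dg)<\infty$ for some $\alpha\in(0,1)$, $N(g)=\max\{\|g\|,\|g^{-1}\|\}$. In each case there is a number $\kappa(s)>0$ and a unique probability measure $\nu_s$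 on $\mathbb P^{d-1}$ with $\int P_s\varphi d\nu_s=\kappa(s)\int\varphi d\nu_s$. Set $r_s^*(y)=\int_{\mathbb P^{d-1}}\delta(x,y)^s\nu_s(dx)$ (a positive continuous function), $\upsilon_s^y(\varphi)=\int\varphi(x)\frac{\delta(x,y)^s}{r_s^*(y)}\nu_s(dx)$, $g\upsilon_s^y(\varphi)=\int\varphi(gx)\upsilon_s^y(dx)$, and $q_s^*(g,y)=\frac{e^{s\sigma(g^*,y)}}{\kappa(s)}\frac{r_s^*(g^*y)}{r_s^*(y)}$. *)

theory Defs
  imports "HOL-Analysis.Analysis" "HOL-Probability.Probability_Measure" "HOL-Computational_Algebra.Polynomial"
begin

typedef ('n::finite) proj = "{L :: (real^'n) set. \<exists>v. v \<noteq> 0 \<and> L = range (\<lambda>c::real. c *\<^sub>R v)}"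
  by (rule exI[of _ "range (\<lambda>c::real. c *\<^sub>R (1::real^'n))"]) (auto intro!: exI[of _ "1::real^'n"])

definition line :: "real^'n::finite \<Rightarrow> 'n proj" where
  "line v = Abs_proj (range (\<lambda>c::real. c *\<^sub>R v))"

definition rep :: "'n::finite proj \<Rightarrow> real^'n" where
  "rep x = (SOME v. v \<noteq> 0 \<and> v \<in> Rep_proj x)"

text \<open>Borel sigma-algebra of the quotient topology on P^{d-1}: sets whose preimage in
  R^d minus 0 is Borel.\<close>
definition proj_borel :: "'n::finite proj measure" where
  "proj_borel = sigma UNIV {A. {v. v \<noteq> 0 \<and> line v \<in> A} \<in> sets borel}"

definition proj_continuous :: "('n::finite proj \<Rightarrow> real) \<Rightarrow> bool" where
  "proj_continuous \<phi> \<longleftrightarrow> continuous_on (UNIV - {0}) (\<lambda>v. \<phi> (line v))"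

text \<open>Action of a matrix on P^{d-1}. The dual projective space is identified with P^{d-1}
  via the standard inner product, so the adjoint g* acts as the transpose.\<close>
definition act :: "real^'n^'n \<Rightarrow> 'n::finite proj \<Rightarrow> 'n proj" where
  "act g x = line (g *v rep x)"

definition delta :: "'n::finite proj \<Rightarrow> 'n proj \<Rightarrow> real" where
  "delta x y = \<bar>rep y \<bullet> rep x\<bar> / (norm (rep y) * norm (rep x))"

definition cocycle :: "real^'n^'n \<Rightarrow> 'n::finite proj \<Rightarrow> real" where
  "cocycle g x = ln (norm (g *v rep x) / norm (rep x))"

text \<open>Real power t^s for t \<ge> 0 with the convention 0^0 = 1.\<close>
definition rpow :: "real \<Rightarrow> real \<Rightarrow> real" where
  "rpow t s = (if s = 0 then 1 else t powr s)"

definition opnorm :: "real^'n^'n::finite \<Rightarrow> real" where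
  "opnorm g = onorm (\<lambda>x. g *v x)"

definition Nmat :: "real^'n^'n::finite \<Rightarrow> real" where
  "Nmat g = max (opnorm g) (opnorm (matrix_inv g))"

definition I_plus :: "(real^'n^'n::finite) measure \<Rightarrow> real set" where
  "I_plus \<mu> = {s. s \<ge> 0 \<and> (\<integral>\<^sup>+ g. ennreal (opnorm g powr s) \<partial>\<mu>) < \<infinity>}"

definition GL :: "(real^'n^'n::finite) set" where
  "GL = {g. invertible g}"

definition supp_GL :: "(real^'n^'n::finite) measure \<Rightarrow> (real^'n^'n) set" where
  "supp_GL \<mu> = {g \<in> GL. \<forall>U. open U \<longrightarrow> g \<in> U \<longrightarrow> emeasure \<mu> U > 0}"

definition Gamma :: "(real^'n^'n::finite) measure \<Rightarrow> (real^'n^'n) set" where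
  "Gamma \<mu> = \<Inter>{S. S \<subseteq> GL \<and> closedin (top_of_set GL) S \<and>
                    (\<forall>a\<in>S. \<forall>b\<in>S. a ** b \<in> S) \<and> supp_GL \<mu> \<subseteq> S}"

definition A1 :: "(real^'n^'n::finite) measure \<Rightarrow> bool" where
  "A1 \<mu> \<longleftrightarrow> \<not> (\<exists>\<V> :: (real^'n) set set. finite \<V> \<and> \<V> \<noteq> {} \<and>
       (\<forall>V\<in>\<V>. subspace V \<and> V \<noteq> {0} \<and> V \<noteq> UNIV) \<and>
       (\<forall>g\<in>Gamma \<mu>. (\<lambda>v. g *v v) ` (\<Union>\<V>) = \<Union>\<V>))"

definition charpoly :: "real^'n^'n::finite \<Rightarrow> complex poly" where
  "charpoly g = det (\<chi> i j. (if i = j then [:0, 1:] else 0) - [:complex_of_real (g $ i $ j):])"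

definition A2 :: "(real^'n^'n::finite) measure \<Rightarrow> bool" where
  "A2 \<mu> \<longleftrightarrow> (\<exists>g\<in>Gamma \<mu>. \<exists>ev. poly (charpoly g) ev = 0 \<and> order ev (charpoly g) = 1 \<and>
       (\<forall>ev2. poly (charpoly g) ev2 = 0 \<longrightarrow> ev2 \<noteq> ev \<longrightarrow> cmod ev2 < cmod ev))"

definition A3 :: "(real^'n^'n::finite) measure \<Rightarrow> bool" where
  "A3 \<mu> \<longleftrightarrow> (\<exists>\<alpha>. 0 < \<alpha> \<and> \<alpha> < 1 \<and> (\<integral>\<^sup>+ g. ennreal (Nmat g powr \<alpha>) \<partial>\<mu>) < \<infinity>)"

definition Ps :: "(real^'n^'n::finite) measure \<Rightarrow> real \<Rightarrow> ('n proj \<Rightarrow> real) \<Rightarrow> 'n proj \<Rightarrow> real" where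
  "Ps \<mu> s \<phi> x = (\<integral>g. exp (s * cocycle g x) * \<phi> (act g x) \<partial>\<mu>)"

text \<open>nu is a probability measure on P^{d-1} with  nu(P_s phi) = kappa nu(phi)  for continuous phi,
  kappa > 0 (this characterizes kappa(s) and nu_s, by uniqueness).\<close>
definition eigen :: "(real^'n^'n::finite) measure \<Rightarrow> real \<Rightarrow> 'n proj measure \<Rightarrow> real \<Rightarrow> bool" where
  "eigen \<mu> s \<nu> \<kappa> \<longleftrightarrow> prob_space \<nu> \<and> sets \<nu> = sets proj_borel \<and> \<kappa> > 0 \<and>
     (\<forall>\<phi>. proj_continuous \<phi> \<longrightarrow> (\<integral>x. Ps \<mu> s \<phi> x \<partial>\<nu>) = \<kappa> * (\<integral>x. \<phi> x \<partial>\<nu>))"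

definition rstar :: "real \<Rightarrow> 'n::finite proj measure \<Rightarrow> 'n proj \<Rightarrow> real" where
  "rstar s \<nu> y = (\<integral>x. rpow (delta x y) s \<partial>\<nu>)"

definition upsilon :: "real \<Rightarrow> 'n::finite proj measure \<Rightarrow> 'n proj \<Rightarrow> ('n proj \<Rightarrow> real) \<Rightarrow> real" where
  "upsilon s \<nu> y \<phi> = (\<integral>x. \<phi> x * rpow (delta x y) s / rstar s \<nu> y \<partial>\<nu>)"

definition g_upsilon :: "real^'n^'n \<Rightarrow> real \<Rightarrow> 'n::finite proj measure \<Rightarrow> 'n proj \<Rightarrow> ('n proj \<Rightarrow> real) \<Rightarrow> real" where
  "g_upsilon g s \<nu> y \<phi> = upsilon s \<nu> y (\<lambda>x. \<phi> (act g x))"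

definition qstar :: "real \<Rightarrow> real \<Rightarrow> 'n::finite proj measure \<Rightarrow> real^'n^'n \<Rightarrow> 'n proj \<Rightarrow> real" where
  "qstar s \<kappa> \<nu> g y = exp (s * cocycle (transpose g) y) / \<kappa> *
                       (rstar s \<nu> (act (transpose g) y) / rstar s \<nu> y)"

end

theory Submission
  imports Defs
begin

(* For continuous phi the eigen-equation nu(P_s phi) = kappa nu(phi) says that nu agrees with
   the measure  phi |-> kappa^-1 int int e^(s sigma(g,x)) phi(g x) mu(dg) nu(dx)  on continuous
   functions. Embedding P^(d-1) into the matrices by orthogonal projections, an embedding with a
   measurable left inverse, uniqueness of finite Borel measures shows that the two measures
   coincide. Applied to phi(x) delta(x,y)^s, the identity
     delta(g x, y)^s e^(s sigma(g,x)) = delta(x, g* y)^s e^(s sigma(g*,y)),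
   which is <f, g v> = <g* f, v>, and Fubini turn the double integral into the right-hand side.
   Integrability of e^(s sigma(g,x)) uniformly in x comes from sigma(g,x) <= log |g| for s >= 0
   and from |sigma(g,x)| <= log N(g) for s < 0, so s0 can be taken to be the exponent of (A3).
   (A1), (A2) and d >= 2 only guarantee that nu_s and kappa(s) exist, which the statement
   assumes. *)

lemma Rep_proj_line: "v \<noteq> 0 \<Longrightarrow> Rep_proj (line v) = range (\<lambda>c::real. c *\<^sub>R v)"
  unfolding line_def by (rule Abs_proj_inverse) auto

lemma rep_nonzero_in_Rep_proj: "rep x \<noteq> 0 \<and> rep x \<in> Rep_proj x"
proof -
  obtain v where "v \<noteq> 0" "Rep_proj x = range (\<lambda>c::real. c *\<^sub>R v)"
    using Rep_proj[of x] by auto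
  then have "v \<noteq> 0 \<and> v \<in> Rep_proj x" by (auto intro: range_eqI[of _ _ 1])
  then show ?thesis unfolding rep_def by (rule someI)
qed

lemma rep_nonzero [simp]: "rep x \<noteq> 0"
  using rep_nonzero_in_Rep_proj by blast

lemma line_scaleR: "c \<noteq> 0 \<Longrightarrow> line (c *\<^sub>R v) = line v"
proof -
  assume "c \<noteq> 0"
  then have "range (\<lambda>d::real. d *\<^sub>R (c *\<^sub>R v)) = range (\<lambda>d. d *\<^sub>R v)"
  proof (intro set_eqI iffI)
    fix w assume "w \<in> range (\<lambda>d. d *\<^sub>R v)"
    then obtain d where "w = (d / c) *\<^sub>R (c *\<^sub>R v)" using \<open>c \<noteq> 0\<close> by auto
    then show "w \<in> range (\<lambda>d. d *\<^sub>R (c *\<^sub>R v))" by blast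
  qed auto
  then show ?thesis unfolding line_def by simp
qed

lemma rep_line: "v \<noteq> 0 \<Longrightarrow> \<exists>c. c \<noteq> 0 \<and> rep (line v) = c *\<^sub>R v"
proof -
  assume "v \<noteq> 0"
  then obtain c where c: "rep (line v) = c *\<^sub>R v"
    using rep_nonzero_in_Rep_proj[of "line v"] Rep_proj_line by auto
  then have "c \<noteq> 0" using rep_nonzero[of "line v"] by auto
  with c show ?thesis by blast
qed

lemma line_rep [simp]: "line (rep x) = x"
proof -
  obtain v where v: "v \<noteq> 0" "Rep_proj x = range (\<lambda>c::real. c *\<^sub>R v)"
    using Rep_proj[of x] by auto
  then obtain c where c: "rep x = c *\<^sub>R v" using rep_nonzero_in_Rep_proj[of x] by auto
  then have "c \<noteq> 0" using rep_nonzero[of x] by auto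
  then have "line (rep x) = line v" using c line_scaleR by simp
  also have "\<dots> = x" unfolding line_def using v(2) by (metis Rep_proj_inverse)
  finally show ?thesis .
qed

lemma act_line: "v \<noteq> 0 \<Longrightarrow> act g (line v) = line (g *v v)"
  using rep_line[of v] by (auto simp: act_def matrix_vector_mult_scaleR line_scaleR)

lemma cocycle_line: "v \<noteq> 0 \<Longrightarrow> cocycle g (line v) = ln (norm (g *v v) / norm v)"
  using rep_line[of v] by (auto simp: cocycle_def matrix_vector_mult_scaleR)

lemma delta_line:
  assumes "u \<noteq> 0" "v \<noteq> 0"
  shows "delta (line u) (line v) = \<bar>v \<bullet> u\<bar> / (norm v * norm u)"
proof -
  obtain a b where "a \<noteq> 0" "rep (line u) = a *\<^sub>R u" "b \<noteq> 0" "rep (line v) = b *\<^sub>R v"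
    using rep_line assms by metis
  then show ?thesis
    by (simp add: delta_def abs_mult mult.assoc mult.left_commute[of "\<bar>a\<bar>"])
qed

lemma matrix_vector_mult_nonzero:
  fixes g :: "real^'n::finite^'n"
  shows "invertible g \<Longrightarrow> v \<noteq> 0 \<Longrightarrow> g *v v \<noteq> 0"
  using inj_matrix_vector_mult[of g] by (metis injD matrix_vector_mult_0_right)

lemma delta_act_cocycle_transpose:
  fixes g :: "real^'n::finite^'n"
  assumes g: "invertible g"
  shows "rpow (delta (act g x) y) s * exp (s * cocycle g x)
       = rpow (delta x (act (transpose g) y)) s * exp (s * cocycle (transpose g) y)"
proof (cases "s = 0")
  case True
  then show ?thesis by (simp add: rpow_def)
next
  case False
  define v f where "v = rep x" and "f = rep y"
  have v: "v \<noteq> 0" and f: "f \<noteq> 0" and x: "x = line v" and y: "y = line f"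
    by (simp_all add: v_def f_def)
  have gv: "g *v v \<noteq> 0" and gf: "transpose g *v f \<noteq> 0"
    using matrix_vector_mult_nonzero g transpose_invertible v f by blast+
  have exp_cocycle: "exp (s * cocycle h (line u)) = (norm (h *v u) / norm u) powr s"
    if "u \<noteq> 0" "h *v u \<noteq> 0" for h :: "real^'n^'n" and u
    using that by (simp add: cocycle_line powr_def)
  have "rpow (delta (act g x) y) s * exp (s * cocycle g x)
      = (\<bar>f \<bullet> (g *v v)\<bar> / (norm f * norm (g *v v))) powr s * (norm (g *v v) / norm v) powr s"
    using False v f gv by (simp add: x y act_line delta_line exp_cocycle rpow_def)
  also have "\<dots> = (\<bar>f \<bullet> (g *v v)\<bar> / (norm f * norm v)) powr s"
    using gv by (simp add: powr_mult[symmetric])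
  also have "\<dots> = (\<bar>(transpose g *v f) \<bullet> v\<bar> / (norm (transpose g *v f) * norm v)) powr s
      * (norm (transpose g *v f) / norm f) powr s"
    using gf by (simp add: powr_mult[symmetric] dot_lmul_matrix mult.commute)
  also have "\<dots> = rpow (delta x (act (transpose g) y)) s * exp (s * cocycle (transpose g) y)"
    using False v f gf by (simp add: x y act_line delta_line exp_cocycle rpow_def)
  finally show ?thesis .
qed

lemma sets_proj_borel:
  "sets (proj_borel :: 'n::finite proj measure) = {A. {v. v \<noteq> 0 \<and> line v \<in> A} \<in> sets borel}"
proof -
  have "sigma_algebra UNIV {A::'n proj set. {v. v \<noteq> 0 \<and> line v \<in> A} \<in> sets borel}"
    unfolding sigma_algebra_iff2
  proof (intro conjI allI ballI impI)
    fix A :: "'n proj set" assume "A \<in> {A. {v. v \<noteq> 0 \<and> line v \<in> A} \<in> sets borel}"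
    moreover have "{v. v \<noteq> 0 \<and> line v \<in> UNIV - A} = (UNIV - {0}) - {v. v \<noteq> 0 \<and> line v \<in> A}"
      by auto
    ultimately show "UNIV - A \<in> {A. {v. v \<noteq> 0 \<and> line v \<in> A} \<in> sets borel}" by auto
  next
    fix A :: "nat \<Rightarrow> 'n proj set"
    assume "range A \<subseteq> {A. {v. v \<noteq> 0 \<and> line v \<in> A} \<in> sets borel}"
    moreover have "{v. v \<noteq> 0 \<and> line v \<in> (\<Union>i. A i)} = (\<Union>i. {v. v \<noteq> 0 \<and> line v \<in> A i})"
      by auto
    ultimately show "(\<Union>i. A i) \<in> {A. {v. v \<noteq> 0 \<and> line v \<in> A} \<in> sets borel}" by auto
  qed auto
  then show ?thesis
    unfolding proj_borel_def using sigma_algebra.sigma_sets_eq by (simp add: sets_measure_of)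
qed

lemma space_proj_borel [simp]: "space proj_borel = UNIV"
  unfolding proj_borel_def by simp

lemma measurable_proj_borelI:
  assumes "\<And>B. B \<in> sets N \<Longrightarrow> {v. v \<noteq> 0 \<and> f (line v) \<in> B} \<in> sets borel"
    and "f \<in> UNIV \<rightarrow> space N"
  shows "f \<in> measurable proj_borel N"
  using assms by (auto simp: measurable_def sets_proj_borel)

lemma measurable_line [measurable]: "line \<in> measurable borel (proj_borel :: 'n::finite proj measure)"
proof (rule measurableI)
  fix A :: "'n proj set" assume "A \<in> sets proj_borel"
  moreover have "line -` A \<inter> space borel
      = {v. v \<noteq> 0 \<and> line v \<in> A} \<union> (if line 0 \<in> A then {0} else {})"
    by auto
  ultimately show "line -` A \<inter> space borel \<in> sets borel" by (auto simp: sets_proj_borel)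
qed auto

lemma borel_measurable_vecI:
  fixes f :: "'a \<Rightarrow> 'b::euclidean_space^'n::finite"
  assumes "\<And>i. (\<lambda>x. f x $ i) \<in> borel_measurable M"
  shows "f \<in> borel_measurable M"
proof (rule borel_measurable_euclidean_space[THEN iffD2], intro ballI)
  fix b :: "'b^'n" assume "b \<in> Basis"
  then obtain i u where b: "b = axis i u" "u \<in> Basis" by (auto simp: Basis_vec_def)
  have "(\<lambda>x. f x $ i \<bullet> u) \<in> borel_measurable M"
    using assms[of i] by (intro borel_measurable_inner) simp_all
  then show "(\<lambda>x. f x \<bullet> b) \<in> borel_measurable M" by (simp add: b inner_axis)
qed

lemma borel_measurable_vec_nth [measurable (raw)]:
  fixes f :: "'a \<Rightarrow> 'b::euclidean_space^'n::finite"
  shows "f \<in> borel_measurable M \<Longrightarrow> (\<lambda>x. f x $ i) \<in> borel_measurable M"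
  by (erule measurable_compose)
     (intro borel_measurable_continuous_onI continuous_intros)

lemma borel_measurable_matrix_vector_mult [measurable (raw)]:
  fixes f :: "'a \<Rightarrow> real^'n::finite^'m::finite" and h :: "'a \<Rightarrow> real^'n"
  shows "f \<in> borel_measurable M \<Longrightarrow> h \<in> borel_measurable M \<Longrightarrow> (\<lambda>x. f x *v h x) \<in> borel_measurable M"
  by (intro borel_measurable_vecI) (simp add: matrix_vector_mult_def)

lemma borel_measurable_transpose [measurable (raw)]:
  fixes f :: "'a \<Rightarrow> real^'n::finite^'m::finite"
  shows "f \<in> borel_measurable M \<Longrightarrow> (\<lambda>x. transpose (f x)) \<in> borel_measurable M"
  by (intro borel_measurable_vecI) (simp add: transpose_def)

text \<open>\<open>rep\<close> is defined by choice and need not be measurable; the nonzero columns of the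
  orthogonal projection onto a line give a measurable choice of representatives.\<close>
definition projector :: "real^'n::finite \<Rightarrow> real^'n^'n" where
  "projector v = (\<chi> i j. v $ i * v $ j / (norm v)\<^sup>2)"

definition line_projector :: "'n::finite proj \<Rightarrow> real^'n^'n" where
  "line_projector x = projector (rep x)"

definition nonzero_column :: "real^'n::finite^'n \<Rightarrow> real^'n" where
  "nonzero_column M = column (SOME j. M $ j $ j \<noteq> 0) M"

definition mrep :: "'n::finite proj \<Rightarrow> real^'n" where
  "mrep x = nonzero_column (line_projector x)"

lemma projector_scaleR:
  assumes "c \<noteq> 0"
  shows "projector (c *\<^sub>R v) = projector v"
proof -
  have "c * a * (c * b) / (c\<^sup>2 * n) = a * b / n" for a b n :: real
    using assms by (simp add: power2_eq_square)
  then show ?thesis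
    by (simp add: projector_def vec_eq_iff power_mult_distrib power2_abs)
qed

lemma line_projector_line: "v \<noteq> 0 \<Longrightarrow> line_projector (line v) = projector v"
  using rep_line[of v] projector_scaleR unfolding line_projector_def by auto

lemma continuous_on_projector: "continuous_on (UNIV - {0}) projector"
  unfolding projector_def by (intro continuous_on_vec_lambda continuous_intros) auto

lemma borel_measurable_projector [measurable]:
  "(projector :: real^'n::finite \<Rightarrow> _) \<in> borel_measurable borel"
  unfolding projector_def by (intro borel_measurable_vecI) simp

lemma measurable_line_projector [measurable]:
  "(line_projector :: 'n::finite proj \<Rightarrow> _) \<in> borel_measurable proj_borel"
proof (rule measurable_proj_borelI)
  fix B :: "(real^'n^'n) set" assume B: "B \<in> sets borel"
  have "{v. v \<noteq> 0 \<and> line_projector (line v) \<in> B} = (UNIV - {0}) \<inter> (projector -` B \<inter> space borel)"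
    by (auto simp: line_projector_line)
  also have "\<dots> \<in> sets borel" using measurable_sets[OF borel_measurable_projector B] by auto
  finally show "{v. v \<noteq> 0 \<and> line_projector (line v) \<in> B} \<in> sets borel" .
qed auto

lemma measurable_nonzero_column [measurable]:
  "(nonzero_column :: real^'n::finite^'n \<Rightarrow> _) \<in> borel_measurable borel"
proof -
  define pattern where "pattern = (\<lambda>M::real^'n^'n. \<lambda>j. M $ j $ j \<noteq> 0)"
  have "pattern \<in> measurable borel (count_space UNIV)"
    unfolding measurable_count_space_eq2_countable
  proof (intro conjI ballI)
    fix P :: "'n \<Rightarrow> bool"
    have "Measurable.pred borel (\<lambda>M::real^'n^'n. \<forall>j. (M $ j $ j \<noteq> 0) = P j)" by measurable
    moreover have "pattern -` {P} \<inter> space borel = {M. \<forall>j. (M $ j $ j \<noteq> 0) = P j}"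
      by (auto simp: pattern_def fun_eq_iff)
    ultimately show "pattern -` {P} \<inter> space borel \<in> sets borel" by (simp add: pred_def)
  qed auto
  then have pivot: "(\<lambda>M. SOME j. pattern M j) \<in> measurable borel (count_space UNIV)"
    by (rule measurable_comp[where g="\<lambda>P. SOME j. P j", unfolded comp_def]) simp
  have "(\<lambda>M. M $ i $ (SOME j. pattern M j)) \<in> borel_measurable borel" for i
    by (rule measurable_compose_countable[OF _ pivot]) simp
  then show ?thesis
    unfolding nonzero_column_def by (intro borel_measurable_vecI) (simp add: column_def pattern_def)
qed

lemma measurable_mrep [measurable]: "mrep \<in> borel_measurable proj_borel"
  unfolding mrep_def by simp

lemma mrep_eq_scaleR_rep: "\<exists>c. c \<noteq> 0 \<and> mrep x = c *\<^sub>R rep x"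
proof -
  define u where "u = rep x"
  define k where "k = (SOME j. projector u $ j $ j \<noteq> 0)"
  have u: "u \<noteq> 0" by (simp add: u_def)
  then obtain j where "u $ j \<noteq> 0" by (auto simp: vec_eq_iff)
  then have "\<exists>j. projector u $ j $ j \<noteq> 0" using u by (auto simp: projector_def)
  then have "projector u $ k $ k \<noteq> 0" unfolding k_def by (rule someI_ex)
  then have "u $ k / (norm u)\<^sup>2 \<noteq> 0" by (simp add: projector_def)
  moreover have "mrep x = (u $ k / (norm u)\<^sup>2) *\<^sub>R u"
    unfolding mrep_def line_projector_def nonzero_column_def u_def[symmetric] k_def[symmetric]
    by (simp add: projector_def column_def vec_eq_iff mult.commute)
  ultimately show ?thesis unfolding u_def by blast
qed

lemma mrep_nonzero [simp]: "mrep x \<noteq> 0"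
  using mrep_eq_scaleR_rep[of x] by auto

lemma line_mrep [simp]: "line (mrep x) = x"
  using mrep_eq_scaleR_rep[of x] line_scaleR line_rep by metis

lemma act_mrep: "act g x = line (g *v mrep x)"
  using act_line[of "mrep x" g] by simp

lemma cocycle_mrep: "cocycle g x = ln (norm (g *v mrep x) / norm (mrep x))"
  using cocycle_line[of "mrep x" g] by simp

lemma delta_mrep: "delta x y = \<bar>mrep y \<bullet> mrep x\<bar> / (norm (mrep y) * norm (mrep x))"
  using delta_line[of "mrep x" "mrep y"] by simp

lemma measurable_act [measurable (raw)]:
  assumes [measurable]: "f \<in> borel_measurable M" "h \<in> measurable M proj_borel"
  shows "(\<lambda>x. act (f x) (h x)) \<in> measurable M proj_borel"
  unfolding act_mrep by measurable

lemma borel_measurable_cocycle [measurable (raw)]: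
  assumes [measurable]: "f \<in> borel_measurable M" "h \<in> measurable M proj_borel"
  shows "(\<lambda>x. cocycle (f x) (h x)) \<in> borel_measurable M"
  unfolding cocycle_mrep by measurable

lemma borel_measurable_delta [measurable (raw)]:
  assumes [measurable]: "f \<in> measurable M proj_borel" "h \<in> measurable M proj_borel"
  shows "(\<lambda>x. delta (f x) (h x)) \<in> borel_measurable M"
  unfolding delta_mrep by measurable

lemma borel_measurable_rpow [measurable (raw)]:
  "f \<in> borel_measurable M \<Longrightarrow> (\<lambda>x. rpow (f x) s) \<in> borel_measurable M"
  by (simp add: rpow_def)

lemma continuous_approx_indicator_closed:
  fixes C :: "'a::metric_space set"
  assumes "closed C"
  obtains f :: "nat \<Rightarrow> 'a \<Rightarrow> real"
  where "\<And>n. continuous_on UNIV (f n)" "\<And>n x. 0 \<le> f n x \<and> f n x \<le> 1"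
    "\<And>x. (\<lambda>n. f n x) \<longlonglongrightarrow> indicator C x"
proof (cases "C = {}")
  case True
  then show ?thesis by (intro that[of "\<lambda>_ _. 0"]) auto
next
  case False
  define f where "f n x = max 0 (1 - real n * infdist x C)" for n x
  have "(\<lambda>n. f n x) \<longlonglongrightarrow> indicator C x" for x
  proof (cases "x \<in> C")
    case True
    then show ?thesis by (simp add: f_def)
  next
    case False
    then have "infdist x C > 0"
      using in_closed_iff_infdist_zero[OF assms \<open>C \<noteq> {}\<close>] infdist_nonneg[of x C] by simp
    moreover obtain N :: nat where "1 / infdist x C < N" using reals_Archimedean2 by blast
    ultimately have "1 < real N * infdist x C" by (simp add: field_simps)
    then have "eventually (\<lambda>n. 1 < real n * infdist x C) sequentially"
      using \<open>infdist x C > 0\<close>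
      by (intro eventually_sequentiallyI[of N]) (smt (verit) mult_right_mono of_nat_mono)
    then have "eventually (\<lambda>n. f n x = indicator C x) sequentially"
      by eventually_elim (use False in \<open>simp add: f_def\<close>)
    then show ?thesis by (rule tendsto_eventually)
  qed
  moreover have "continuous_on UNIV (f n)" for n
    unfolding f_def by (intro continuous_intros)
  moreover have "0 \<le> f n x \<and> f n x \<le> 1" for n x
    using infdist_nonneg[of x C] by (simp add: f_def)
  ultimately show ?thesis using that by blast
qed

lemma measure_closed_eq_if_integral_continuous_eq:
  fixes P Q :: "'a::metric_space measure"
  assumes sets: "sets P = sets borel" "sets Q = sets borel"
    and finite: "finite_measure P" "finite_measure Q"
    and eq: "\<And>f :: 'a \<Rightarrow> real. continuous_on UNIV f \<Longrightarrow> (\<And>x. 0 \<le> f x \<and> f x \<le> 1) \<Longrightarrow>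
              (\<integral>x. f x \<partial>P) = (\<integral>x. f x \<partial>Q)"
    and "closed C"
  shows "measure P C = measure Q C"
proof -
  obtain f :: "nat \<Rightarrow> 'a \<Rightarrow> real" where f: "\<And>n. continuous_on UNIV (f n)"
    "\<And>n x. 0 \<le> f n x \<and> f n x \<le> 1" "\<And>x. (\<lambda>n. f n x) \<longlonglongrightarrow> indicator C x"
    using continuous_approx_indicator_closed[OF \<open>closed C\<close>] by metis
  have conv: "(\<lambda>n. \<integral>x. f n x \<partial>M) \<longlonglongrightarrow> measure M C"
    if "sets M = sets borel" "finite_measure M" for M :: "'a measure"
  proof -
    note cong = measurable_cong_sets[OF that(1) refl]
    have "(\<lambda>n. \<integral>x. f n x \<partial>M) \<longlonglongrightarrow> (\<integral>x. indicator C x \<partial>M)"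
    proof (rule integral_dominated_convergence[where w="\<lambda>_. 1"])
      show "indicator C \<in> borel_measurable M"
        unfolding cong using \<open>closed C\<close> by (simp add: borel_closed)
      show "f n \<in> borel_measurable M" for n
        unfolding cong by (rule borel_measurable_continuous_onI[OF f(1)])
      show "integrable M (\<lambda>_. 1::real)"
        using that(2) by (rule finite_measure.integrable_const)
    qed (use f(2,3) in auto)
    then show ?thesis using \<open>closed C\<close> that(1) by (simp add: borel_closed)
  qed
  have "(\<lambda>n. \<integral>x. f n x \<partial>P) = (\<lambda>n. \<integral>x. f n x \<partial>Q)"
    using eq[OF f(1,2)] by simp
  then show ?thesis
    using conv[OF sets(1) finite(1)] conv[OF sets(2) finite(2)] by (metis LIMSEQ_unique)
qed

lemma finite_measure_eqI_continuous:
  fixes P Q :: "'a::metric_space measure"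
  assumes sets: "sets P = sets borel" "sets Q = sets borel"
    and finite: "finite_measure P" "finite_measure Q"
    and eq: "\<And>f. continuous_on UNIV f \<Longrightarrow> (\<And>x. 0 \<le> f x \<and> f x \<le> 1) \<Longrightarrow>
              (\<integral>\<^sup>+x. ennreal (f x) \<partial>P) = (\<integral>\<^sup>+x. ennreal (f x) \<partial>Q)"
  shows "P = Q"
proof -
  have integral_eq: "(\<integral>x. f x \<partial>P) = (\<integral>x. f x \<partial>Q)"
    if cont: "continuous_on UNIV f" and bounds: "\<And>x. 0 \<le> f x \<and> f x \<le> 1" for f :: "'a \<Rightarrow> real"
  proof -
    have "ennreal (\<integral>x. f x \<partial>M) = (\<integral>\<^sup>+x. ennreal (f x) \<partial>M)"
      if "sets M = sets borel" "finite_measure M" for M :: "'a measure"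
    proof (rule nn_integral_eq_integral[symmetric])
      show "integrable M f"
      proof (rule finite_measure.integrable_const_bound[OF that(2), where B=1])
        show "f \<in> borel_measurable M"
          unfolding measurable_cong_sets[OF that(1) refl]
          by (rule borel_measurable_continuous_onI[OF cont])
      qed (use bounds in auto)
    qed (use bounds in auto)
    then have "ennreal (\<integral>x. f x \<partial>P) = ennreal (\<integral>x. f x \<partial>Q)"
      using eq[OF cont bounds] sets finite by simp
    then show ?thesis
      using bounds by (simp add: integral_nonneg ennreal_inj)
  qed
  have "emeasure P C = emeasure Q C" if "closed C" for C
  proof -
    have "measure P C = measure Q C"
      by (rule measure_closed_eq_if_integral_continuous_eq[OF sets finite integral_eq that])
    then show ?thesis using finite by (simp add: finite_measure.emeasure_eq_measure)
  qed
  then show ?thesis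
    using sets finite
    by (intro measure_eqI_generator_eq[where E="Collect closed" and \<Omega>=UNIV and A="\<lambda>_. UNIV"])
       (auto simp: Int_stable_def borel_eq_closed finite_measure.emeasure_finite
         sets_eq_imp_space_eq[of _ borel])
qed

lemma proj_continuous_comp_line_projector:
  "continuous_on UNIV f \<Longrightarrow> proj_continuous (\<lambda>x. f (line_projector x))"
  unfolding proj_continuous_def
  by (rule continuous_on_cong[THEN iffD1, OF refl _ continuous_on_compose2[OF _ continuous_on_projector]])
     (auto simp: line_projector_line)

lemma measurable_line_projector_cong:
  "sets M = sets proj_borel \<Longrightarrow> line_projector \<in> measurable M borel"
  by (subst measurable_cong_sets[of M proj_borel borel borel]) (simp_all add: measurable_line_projector)

lemma distr_line_projector_inverse:
  fixes R :: "'n::finite proj measure"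
  assumes "sets R = sets proj_borel"
  shows "distr (distr R borel line_projector) proj_borel (\<lambda>M. line (nonzero_column M)) = R"
proof -
  have "distr (distr R borel line_projector) proj_borel (\<lambda>M. line (nonzero_column M))
      = distr R proj_borel (\<lambda>x. line (nonzero_column (line_projector x)))"
    by (subst distr_distr) (simp_all add: measurable_line_projector_cong[OF assms] comp_def)
  also have "\<dots> = R"
    unfolding mrep_def[symmetric] line_mrep by (rule distr_id2[OF assms[symmetric]])
  finally show ?thesis .
qed

lemma proj_measure_eqI_continuous:
  fixes P Q :: "'n::finite proj measure"
  assumes sets: "sets P = sets proj_borel" "sets Q = sets proj_borel"
    and finite: "finite_measure P" "finite_measure Q"
    and eq: "\<And>f. continuous_on UNIV f \<Longrightarrow> (\<And>M. 0 \<le> f M \<and> f M \<le> 1) \<Longrightarrow>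
      (\<integral>\<^sup>+x. ennreal (f (line_projector x)) \<partial>P) = (\<integral>\<^sup>+x. ennreal (f (line_projector x)) \<partial>Q)"
  shows "P = Q"
proof -
  note meas = measurable_line_projector_cong
  have nn_integral_distr_line_projector:
    "(\<integral>\<^sup>+M. f M \<partial>distr R borel line_projector) = (\<integral>\<^sup>+x. f (line_projector x) \<partial>R)"
    if "sets R = sets proj_borel" "f \<in> borel_measurable borel"
    for R :: "'n proj measure" and f :: "real^'n^'n \<Rightarrow> ennreal"
    by (rule nn_integral_distr[OF meas[OF that(1)]]) (use that(2) in simp)
  have "distr P borel line_projector = distr Q borel line_projector"
  proof (rule finite_measure_eqI_continuous)
    show "finite_measure (distr P borel line_projector)"
      by (rule finite_measure.finite_measure_distr[OF finite(1) meas[OF sets(1)]])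
    show "finite_measure (distr Q borel line_projector)"
      by (rule finite_measure.finite_measure_distr[OF finite(2) meas[OF sets(2)]])
    fix f :: "real^'n^'n \<Rightarrow> real"
    assume cont: "continuous_on UNIV f" and bounds: "\<And>M. 0 \<le> f M \<and> f M \<le> 1"
    have "(\<lambda>M. ennreal (f M)) \<in> borel_measurable borel"
      using borel_measurable_continuous_onI[OF cont] by measurable
    then show "(\<integral>\<^sup>+M. ennreal (f M) \<partial>distr P borel line_projector)
        = (\<integral>\<^sup>+M. ennreal (f M) \<partial>distr Q borel line_projector)"
      using eq[OF cont bounds] by (simp add: nn_integral_distr_line_projector sets)
  qed simp_all
  then show ?thesis
    using distr_line_projector_inverse[OF sets(1)] distr_line_projector_inverse[OF sets(2)] by metis
qed

lemma integrable_bounded_mult: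
  fixes f g :: "'a \<Rightarrow> real"
  assumes "integrable M f" "g \<in> borel_measurable M" "\<And>x. \<bar>g x\<bar> \<le> B"
  shows "integrable M (\<lambda>x. g x * f x)"
proof (rule Bochner_Integration.integrable_bound[where f="\<lambda>x. B * \<bar>f x\<bar>"])
  show "integrable M (\<lambda>x. B * \<bar>f x\<bar>)"
    using assms(1) by (intro integrable_mult_right integrable_abs)
  show "(\<lambda>x. g x * f x) \<in> borel_measurable M"
    using assms(1,2) by measurable
  have "\<bar>g x\<bar> * \<bar>f x\<bar> \<le> \<bar>B\<bar> * \<bar>f x\<bar>" for x
    using assms(3)[of x] by (intro mult_right_mono) auto
  then show "AE x in M. norm (g x * f x) \<le> norm (B * \<bar>f x\<bar>)"
    by (simp add: abs_mult)
qed

locale eigenmeasure =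
  fixes \<mu> :: "(real^'n^'n::finite) measure" and s :: real and \<nu> :: "'n proj measure"
    and \<kappa> :: real and C :: real
  assumes prob_space_mu: "prob_space \<mu>" and sets_mu: "sets \<mu> = sets borel"
    and AE_invertible: "AE g in \<mu>. invertible g"
    and eigen_nu: "eigen \<mu> s \<nu> \<kappa>"
    and integrable_exp_cocycle: "\<And>x. integrable \<mu> (\<lambda>g. exp (s * cocycle g x))"
    and integral_exp_cocycle_le: "\<And>x. (\<integral>g. exp (s * cocycle g x) \<partial>\<mu>) \<le> C"
begin

lemma prob_space_nu: "prob_space \<nu>" and sets_nu: "sets \<nu> = sets proj_borel"
  and kappa_pos: "\<kappa> > 0"
  and eigen_equation: "\<And>\<phi>. proj_continuous \<phi> \<Longrightarrow> (\<integral>x. Ps \<mu> s \<phi> x \<partial>\<nu>) = \<kappa> * (\<integral>x. \<phi> x \<partial>\<nu>)"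
  using eigen_nu unfolding eigen_def by auto

sublocale MU: prob_space \<mu> by (rule prob_space_mu)
sublocale NU: prob_space \<nu> by (rule prob_space_nu)
sublocale NU_MU: pair_prob_space \<nu> \<mu> ..

lemmas measurable_nu_cong = measurable_cong_sets[OF sets_nu refl]
lemmas measurable_mu_cong = measurable_cong_sets[OF sets_mu refl]
lemmas measurable_nu_mu_cong = measurable_cong_sets[OF sets_pair_measure_cong[OF sets_nu sets_mu] refl]
lemmas measurable_mu_nu_cong = measurable_cong_sets[OF sets_pair_measure_cong[OF sets_mu sets_nu] refl]

definition weight :: "'n proj \<Rightarrow> real^'n^'n \<Rightarrow> real" where
  "weight x g = exp (s * cocycle g x) / \<kappa>"

lemma weight_pos: "weight x g > 0"
  unfolding weight_def using kappa_pos by simp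

lemma borel_measurable_weight [measurable]: "(\<lambda>(x, g). weight x g) \<in> borel_measurable (\<nu> \<Otimes>\<^sub>M \<mu>)"
  unfolding measurable_nu_mu_cong weight_def by measurable

lemma measurable_act_pair [measurable]: "(\<lambda>(x, g). act g x) \<in> measurable (\<nu> \<Otimes>\<^sub>M \<mu>) proj_borel"
  unfolding measurable_nu_mu_cong by measurable

text \<open>The measure \<open>\<phi> \<mapsto> \<nu>(P\<^sub>s \<phi>) / \<kappa>\<close>; the eigen-equation says that it agrees with \<open>\<nu>\<close> on
  continuous functions.\<close>
definition transfer_measure :: "'n proj measure" where
  "transfer_measure = distr (density (\<nu> \<Otimes>\<^sub>M \<mu>) (\<lambda>(x, g). ennreal (weight x g))) proj_borel (\<lambda>(x, g). act g x)"

lemma sets_transfer_measure: "sets transfer_measure = sets proj_borel"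
  unfolding transfer_measure_def by simp

lemma nn_integral_transfer_measure:
  assumes [measurable]: "F \<in> borel_measurable proj_borel"
  shows "(\<integral>\<^sup>+y. F y \<partial>transfer_measure) = (\<integral>\<^sup>+x. \<integral>\<^sup>+g. ennreal (weight x g) * F (act g x) \<partial>\<mu> \<partial>\<nu>)"
proof -
  have "(\<integral>\<^sup>+y. F y \<partial>transfer_measure)
      = (\<integral>\<^sup>+z. F (case z of (x, g) \<Rightarrow> act g x) \<partial>density (\<nu> \<Otimes>\<^sub>M \<mu>) (\<lambda>(x, g). ennreal (weight x g)))"
    unfolding transfer_measure_def by (rule nn_integral_distr) simp_all
  also have "\<dots> = (\<integral>\<^sup>+z. (case z of (x, g) \<Rightarrow> ennreal (weight x g) * F (act g x)) \<partial>(\<nu> \<Otimes>\<^sub>M \<mu>))"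
    by (subst nn_integral_density) (auto simp: case_prod_beta')
  also have "\<dots> = (\<integral>\<^sup>+x. \<integral>\<^sup>+g. ennreal (weight x g) * F (act g x) \<partial>\<mu> \<partial>\<nu>)"
  proof -
    have "(\<lambda>(x, g). ennreal (weight x g) * F (act g x)) \<in> borel_measurable (\<nu> \<Otimes>\<^sub>M \<mu>)"
      by measurable
    from MU.nn_integral_fst[OF this] show ?thesis by simp
  qed
  finally show ?thesis .
qed

lemma borel_measurable_Ps:
  assumes [measurable]: "\<phi> \<in> borel_measurable proj_borel"
  shows "Ps \<mu> s \<phi> \<in> borel_measurable proj_borel"
proof -
  have "(\<lambda>(x, g). exp (s * cocycle g x) * \<phi> (act g x)) \<in> borel_measurable (proj_borel \<Otimes>\<^sub>M \<mu>)"
    unfolding measurable_cong_sets[OF sets_pair_measure_cong[OF refl sets_mu] refl] by measurable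
  then show ?thesis
    unfolding Ps_def[abs_def] by (rule MU.borel_measurable_lebesgue_integral[where f="\<lambda>x g. _ x g", simplified])
qed

lemma integrable_exp_cocycle_mult:
  assumes [measurable]: "\<phi> \<in> borel_measurable proj_borel" and bound: "\<And>x. \<bar>\<phi> x\<bar> \<le> 1"
  shows "integrable \<mu> (\<lambda>g. exp (s * cocycle g x) * \<phi> (act g x))"
proof -
  have "(\<lambda>g. \<phi> (act g x)) \<in> borel_measurable \<mu>"
    unfolding measurable_mu_cong by measurable
  moreover have "\<And>g. \<bar>\<phi> (act g x)\<bar> \<le> 1" using bound by simp
  ultimately have "integrable \<mu> (\<lambda>g. \<phi> (act g x) * exp (s * cocycle g x))"
    by (rule integrable_bounded_mult[OF integrable_exp_cocycle])
  then show ?thesis by (simp add: mult.commute)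
qed

lemma Ps_bounds:
  assumes [measurable]: "\<phi> \<in> borel_measurable proj_borel" and bounds: "\<And>x. 0 \<le> \<phi> x \<and> \<phi> x \<le> 1"
  shows "0 \<le> Ps \<mu> s \<phi> x \<and> Ps \<mu> s \<phi> x \<le> C"
proof
  show "0 \<le> Ps \<mu> s \<phi> x"
    unfolding Ps_def using bounds by (intro Bochner_Integration.integral_nonneg) auto
  have "Ps \<mu> s \<phi> x \<le> (\<integral>g. exp (s * cocycle g x) \<partial>\<mu>)"
    unfolding Ps_def using bounds
    by (intro integral_mono integrable_exp_cocycle_mult integrable_exp_cocycle)
       (auto intro!: mult_left_le simp: abs_le_iff)
  also have "\<dots> \<le> C" by (rule integral_exp_cocycle_le)
  finally show "Ps \<mu> s \<phi> x \<le> C" .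
qed

lemma nn_integral_weight_mult_act:
  assumes [measurable]: "\<phi> \<in> borel_measurable proj_borel" and bounds: "\<And>x. 0 \<le> \<phi> x \<and> \<phi> x \<le> 1"
  shows "(\<integral>\<^sup>+g. ennreal (weight x g) * ennreal (\<phi> (act g x)) \<partial>\<mu>) = ennreal (Ps \<mu> s \<phi> x / \<kappa>)"
proof -
  have "(\<integral>\<^sup>+g. ennreal (weight x g) * ennreal (\<phi> (act g x)) \<partial>\<mu>)
      = (\<integral>\<^sup>+g. ennreal (exp (s * cocycle g x) * \<phi> (act g x) / \<kappa>) \<partial>\<mu>)"
  proof (intro nn_integral_cong)
    fix g
    have "ennreal (weight x g) * ennreal (\<phi> (act g x)) = ennreal (weight x g * \<phi> (act g x))"
      using weight_pos[of x g] by (simp add: ennreal_mult')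
    then show "ennreal (weight x g) * ennreal (\<phi> (act g x))
        = ennreal (exp (s * cocycle g x) * \<phi> (act g x) / \<kappa>)"
      by (simp add: weight_def)
  qed
  also have "\<dots> = ennreal (\<integral>g. exp (s * cocycle g x) * \<phi> (act g x) / \<kappa> \<partial>\<mu>)"
    using integrable_exp_cocycle_mult[OF assms(1)] bounds kappa_pos
    by (intro nn_integral_eq_integral) (auto simp: abs_le_iff)
  finally show ?thesis by (simp add: Ps_def)
qed

lemma nn_integral_transfer_measure_Ps:
  assumes [measurable]: "\<phi> \<in> borel_measurable proj_borel" and bounds: "\<And>x. 0 \<le> \<phi> x \<and> \<phi> x \<le> 1"
  shows "(\<integral>\<^sup>+x. \<phi> x \<partial>transfer_measure) = ennreal ((\<integral>x. Ps \<mu> s \<phi> x \<partial>\<nu>) / \<kappa>)"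
proof -
  have "(\<integral>\<^sup>+x. \<phi> x \<partial>transfer_measure) = (\<integral>\<^sup>+x. ennreal (Ps \<mu> s \<phi> x / \<kappa>) \<partial>\<nu>)"
    by (simp add: nn_integral_transfer_measure nn_integral_weight_mult_act[OF assms])
  also have "\<dots> = ennreal (\<integral>x. Ps \<mu> s \<phi> x / \<kappa> \<partial>\<nu>)"
  proof (rule nn_integral_eq_integral)
    have "(\<lambda>x. Ps \<mu> s \<phi> x / \<kappa>) \<in> borel_measurable \<nu>"
      unfolding measurable_nu_cong using borel_measurable_Ps by measurable
    then show "integrable \<nu> (\<lambda>x. Ps \<mu> s \<phi> x / \<kappa>)"
      using Ps_bounds[OF assms] kappa_pos
      by (intro NU.integrable_const_bound[where B="C / \<kappa>"]) (auto simp: divide_right_mono)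
  qed (use Ps_bounds[OF assms] kappa_pos in auto)
  finally show ?thesis by simp
qed

lemma nn_integral_transfer_measure_continuous:
  fixes f :: "real^'n^'n \<Rightarrow> real"
  assumes cont: "continuous_on UNIV f" and bounds: "\<And>M. 0 \<le> f M \<and> f M \<le> 1"
  shows "(\<integral>\<^sup>+x. ennreal (f (line_projector x)) \<partial>transfer_measure)
       = (\<integral>\<^sup>+x. ennreal (f (line_projector x)) \<partial>\<nu>)"
proof -
  have [measurable]: "f \<in> borel_measurable borel" by (rule borel_measurable_continuous_onI[OF cont])
  have integrable: "integrable \<nu> (\<lambda>x. f (line_projector x))"
    using bounds by (intro NU.integrable_const_bound[where B=1]) (auto simp: measurable_nu_cong)
  have "(\<integral>\<^sup>+x. ennreal (f (line_projector x)) \<partial>transfer_measure)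
      = ennreal ((\<integral>x. Ps \<mu> s (\<lambda>x. f (line_projector x)) x \<partial>\<nu>) / \<kappa>)"
    using bounds by (intro nn_integral_transfer_measure_Ps) auto
  also have "\<dots> = ennreal (\<integral>x. f (line_projector x) \<partial>\<nu>)"
    using eigen_equation[OF proj_continuous_comp_line_projector[OF cont]] kappa_pos by simp
  also have "\<dots> = (\<integral>\<^sup>+x. ennreal (f (line_projector x)) \<partial>\<nu>)"
    using integrable bounds by (intro nn_integral_eq_integral[symmetric]) auto
  finally show ?thesis .
qed

lemma transfer_measure_eq_nu: "transfer_measure = \<nu>"
proof -
  have "finite_measure transfer_measure"
    using nn_integral_transfer_measure_continuous[of "\<lambda>_. 1"] NU.emeasure_space_1
      sets_eq_imp_space_eq[OF sets_transfer_measure]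
    by (intro finite_measureI) simp
  then show ?thesis
    using proj_measure_eqI_continuous[OF sets_transfer_measure sets_nu _ NU.finite_measure_axioms]
      nn_integral_transfer_measure_continuous
    by blast
qed

lemma integral_nu_eq_pair_integral:
  assumes F: "integrable \<nu> F"
  shows "integrable (\<nu> \<Otimes>\<^sub>M \<mu>) (\<lambda>(x, g). weight x g * F (act g x))"
    and "(\<integral>x. F x \<partial>\<nu>) = (\<integral>(x, g). weight x g * F (act g x) \<partial>(\<nu> \<Otimes>\<^sub>M \<mu>))"
proof -
  let ?D = "density (\<nu> \<Otimes>\<^sub>M \<mu>) (\<lambda>(x, g). ennreal (weight x g))"
  have measurable_F [measurable]: "F \<in> borel_measurable proj_borel"
    using borel_measurable_integrable[OF F] unfolding measurable_nu_cong .
  have act: "(\<lambda>(x, g). act g x) \<in> measurable ?D proj_borel" by simp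
  have FT: "(\<lambda>z. F (case z of (x, g) \<Rightarrow> act g x)) \<in> borel_measurable (\<nu> \<Otimes>\<^sub>M \<mu>)" by measurable
  have weight: "(\<lambda>z. case z of (x, g) \<Rightarrow> weight x g) \<in> borel_measurable (\<nu> \<Otimes>\<^sub>M \<mu>)"
    "AE z in \<nu> \<Otimes>\<^sub>M \<mu>. 0 \<le> (case z of (x, g) \<Rightarrow> weight x g)"
    using weight_pos by (auto simp: less_imp_le split: prod.split)
  have "integrable transfer_measure F" using F by (simp add: transfer_measure_eq_nu)
  then have "integrable ?D (\<lambda>z. F (case z of (x, g) \<Rightarrow> act g x))"
    unfolding transfer_measure_def using integrable_distr_eq[OF act measurable_F] by simp
  then show "integrable (\<nu> \<Otimes>\<^sub>M \<mu>) (\<lambda>(x, g). weight x g * F (act g x))"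
    using integrable_density[OF FT weight] by (simp add: case_prod_beta')
  have "(\<integral>x. F x \<partial>\<nu>) = (\<integral>x. F x \<partial>transfer_measure)" by (simp add: transfer_measure_eq_nu)
  also have "\<dots> = (\<integral>z. F (case z of (x, g) \<Rightarrow> act g x) \<partial>?D)"
    unfolding transfer_measure_def by (rule integral_distr[OF act measurable_F])
  also have "\<dots> = (\<integral>(x, g). weight x g * F (act g x) \<partial>(\<nu> \<Otimes>\<^sub>M \<mu>))"
    using integral_density[OF FT weight] by (simp add: case_prod_beta')
  finally show "(\<integral>x. F x \<partial>\<nu>) = (\<integral>(x, g). weight x g * F (act g x) \<partial>(\<nu> \<Otimes>\<^sub>M \<mu>))" .
qed

lemma borel_measurable_rstar [measurable]: "rstar s \<nu> \<in> borel_measurable proj_borel"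
proof -
  have "(\<lambda>(y, x). rpow (delta x y) s) \<in> borel_measurable (proj_borel \<Otimes>\<^sub>M \<nu>)"
    unfolding measurable_cong_sets[OF sets_pair_measure_cong[OF refl sets_nu] refl] by measurable
  then show ?thesis
    unfolding rstar_def[abs_def] by (rule NU.borel_measurable_lebesgue_integral[where f="\<lambda>y x. _ y x", simplified])
qed

lemma borel_measurable_rstar_comp [measurable (raw)]:
  "h \<in> measurable M proj_borel \<Longrightarrow> (\<lambda>x. rstar s \<nu> (h x)) \<in> borel_measurable M"
  by (rule measurable_compose[OF _ borel_measurable_rstar])

lemma borel_measurable_g_upsilon_qstar:
  assumes [measurable]: "\<phi> \<in> borel_measurable proj_borel"
  shows "(\<lambda>g. g_upsilon g s \<nu> (act (transpose g) y) \<phi> * qstar s \<kappa> \<nu> g y) \<in> borel_measurable \<mu>"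
proof -
  have "(\<lambda>(g, x). \<phi> (act g x) * rpow (delta x (act (transpose g) y)) s / rstar s \<nu> (act (transpose g) y))
      \<in> borel_measurable (\<mu> \<Otimes>\<^sub>M \<nu>)"
    unfolding measurable_mu_nu_cong by measurable
  then have "(\<lambda>g. g_upsilon g s \<nu> (act (transpose g) y) \<phi>) \<in> borel_measurable \<mu>"
    unfolding g_upsilon_def upsilon_def by (rule NU.borel_measurable_lebesgue_integral)
  moreover have "(\<lambda>g. qstar s \<kappa> \<nu> g y) \<in> borel_measurable \<mu>"
    unfolding qstar_def measurable_mu_cong by measurable
  ultimately show ?thesis by measurable
qed

text \<open>The integrability hypothesis rules out the junk value \<open>r\<^sub>s\<^sup>*(g\<^sup>*y) = 0\<close> of a
  non-integrable integral.\<close>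
lemma g_upsilon_mult_qstar:
  assumes g: "invertible g"
    and integrable: "integrable \<nu> (\<lambda>x. weight x g * rpow (delta (act g x) y) s)"
  shows "g_upsilon g s \<nu> (act (transpose g) y) \<phi> * qstar s \<kappa> \<nu> g y
       = (\<integral>x. weight x g * (\<phi> (act g x) * rpow (delta (act g x) y) s) \<partial>\<nu>) / rstar s \<nu> y"
proof -
  define y' where "y' = act (transpose g) y"
  define c where "c = exp (s * cocycle (transpose g) y) / \<kappa>"
  define I where "I = (\<integral>x. \<phi> (act g x) * rpow (delta x y') s \<partial>\<nu>)"
  have "c > 0" unfolding c_def using kappa_pos by simp
  have weight_delta: "weight x g * rpow (delta (act g x) y) s = c * rpow (delta x y') s" for x
    using delta_act_cocycle_transpose[OF g, of x y s] unfolding weight_def c_def y'_def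
    by (simp add: field_simps)
  have "(\<integral>x. weight x g * (\<phi> (act g x) * rpow (delta (act g x) y) s) \<partial>\<nu>) = c * I"
    using weight_delta unfolding I_def
    by (simp add: mult.left_commute[of "weight _ g"] mult.left_commute[of "\<phi> _" c])
  moreover have "g_upsilon g s \<nu> (act (transpose g) y) \<phi> * qstar s \<kappa> \<nu> g y
      = I / rstar s \<nu> y' * (c * (rstar s \<nu> y' / rstar s \<nu> y))"
    unfolding g_upsilon_def upsilon_def qstar_def I_def y'_def[symmetric] c_def[symmetric] by simp
  moreover have "I = 0" if "rstar s \<nu> y' = 0"
  proof -
    have "integrable \<nu> (\<lambda>x. rpow (delta x y') s)"
      using integrable \<open>c > 0\<close> by (simp add: weight_delta)
    then have "AE x in \<nu>. rpow (delta x y') s = 0"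
      using that unfolding rstar_def
      by (subst integral_nonneg_eq_0_iff_AE[symmetric]) (auto simp: delta_def rpow_def)
    then show "I = 0" unfolding I_def by (auto intro: integral_eq_zero_AE)
  qed
  ultimately show ?thesis by (cases "rstar s \<nu> y' = 0") auto
qed

lemma upsilon_eq_integral_g_upsilon_qstar:
  assumes [measurable]: "\<phi> \<in> borel_measurable proj_borel" and "bounded (range \<phi>)"
  shows "upsilon s \<nu> y \<phi> = (\<integral>g. g_upsilon g s \<nu> (act (transpose g) y) \<phi> * qstar s \<kappa> \<nu> g y \<partial>\<mu>)"
proof (cases "rstar s \<nu> y = 0")
  case True
  then show ?thesis by (simp add: upsilon_def qstar_def)
next
  case False
  obtain B where B: "\<And>x. \<bar>\<phi> x\<bar> \<le> B" using \<open>bounded (range \<phi>)\<close> by (auto simp: bounded_iff)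
  define H where "H x g = weight x g * (\<phi> (act g x) * rpow (delta (act g x) y) s)" for x g
  have integrable_rpow: "integrable \<nu> (\<lambda>x. rpow (delta x y) s)"
    using False not_integrable_integral_eq unfolding rstar_def by blast
  have integrable_phi_rpow: "integrable \<nu> (\<lambda>x. \<phi> x * rpow (delta x y) s)"
    using B by (intro integrable_bounded_mult[OF integrable_rpow]) (simp add: measurable_nu_cong)
  have "AE g in \<mu>. integrable \<nu> (\<lambda>x. weight x g * rpow (delta (act g x) y) s)"
    using integral_nu_eq_pair_integral(1)[OF integrable_rpow] by (rule NU_MU.AE_integrable_snd)
  then have pointwise: "AE g in \<mu>. g_upsilon g s \<nu> (act (transpose g) y) \<phi> * qstar s \<kappa> \<nu> g y
      = (\<integral>x. H x g \<partial>\<nu>) / rstar s \<nu> y"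
    using AE_invertible by eventually_elim (simp add: H_def g_upsilon_mult_qstar)
  have "(\<integral>g. g_upsilon g s \<nu> (act (transpose g) y) \<phi> * qstar s \<kappa> \<nu> g y \<partial>\<mu>)
      = (\<integral>g. (\<integral>x. H x g \<partial>\<nu>) / rstar s \<nu> y \<partial>\<mu>)"
  proof (rule integral_cong_AE[OF borel_measurable_g_upsilon_qstar[OF assms(1)] _ pointwise])
    have "(\<lambda>(g, x). H x g) \<in> borel_measurable (\<mu> \<Otimes>\<^sub>M \<nu>)"
      unfolding measurable_mu_nu_cong H_def weight_def by measurable
    then have "(\<lambda>g. \<integral>x. H x g \<partial>\<nu>) \<in> borel_measurable \<mu>"
      by (rule NU.borel_measurable_lebesgue_integral)
    then show "(\<lambda>g. (\<integral>x. H x g \<partial>\<nu>) / rstar s \<nu> y) \<in> borel_measurable \<mu>" by measurable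
  qed
  also have "\<dots> = (\<integral>x. \<phi> x * rpow (delta x y) s \<partial>\<nu>) / rstar s \<nu> y"
    using integral_nu_eq_pair_integral[OF integrable_phi_rpow]
    by (simp add: H_def NU_MU.integral_snd)
  also have "\<dots> = upsilon s \<nu> y \<phi>" by (simp add: upsilon_def)
  finally show ?thesis by simp
qed

end

lemma matrix_inv_left:
  fixes g :: "real^'n::finite^'n"
  shows "invertible g \<Longrightarrow> matrix_inv g ** g = mat 1"
  unfolding invertible_def matrix_inv_def by (rule someI2_ex) auto

lemma norm_matrix_vector_mult_le_opnorm:
  fixes g :: "real^'n::finite^'n"
  shows "norm (g *v v) \<le> opnorm g * norm v"
  unfolding opnorm_def by (rule onorm) simp

lemma norm_le_opnorm_matrix_inv:
  fixes g :: "real^'n::finite^'n"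
  assumes "invertible g"
  shows "norm v \<le> opnorm (matrix_inv g) * norm (g *v v)"
  using norm_matrix_vector_mult_le_opnorm[of "matrix_inv g" "g *v v"]
  by (simp add: matrix_vector_mul_assoc matrix_inv_left[OF assms])

lemma
  fixes g :: "real^'n::finite^'n"
  assumes g: "invertible g"
  shows opnorm_pos: "opnorm g > 0"
    and cocycle_le_ln_opnorm: "cocycle g x \<le> ln (opnorm g)"
    and opnorm_matrix_inv_pos: "opnorm (matrix_inv g) > 0"
    and neg_cocycle_le_ln_opnorm_matrix_inv: "- cocycle g x \<le> ln (opnorm (matrix_inv g))"
proof -
  define v where "v = rep x"
  have v: "v \<noteq> 0" and gv: "g *v v \<noteq> 0"
    using matrix_vector_mult_nonzero[OF g] by (simp_all add: v_def)
  have cocycle: "cocycle g x = ln (norm (g *v v) / norm v)"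
    by (simp add: cocycle_def v_def)
  have "norm (g *v v) / norm v \<le> opnorm g"
    using norm_matrix_vector_mult_le_opnorm[of g v] v by (simp add: divide_le_eq)
  moreover have "norm (g *v v) / norm v > 0" using v gv by simp
  ultimately show "opnorm g > 0" and "cocycle g x \<le> ln (opnorm g)"
    unfolding cocycle by simp_all
  have "norm v / norm (g *v v) \<le> opnorm (matrix_inv g)"
    using norm_le_opnorm_matrix_inv[OF g, of v] gv by (simp add: divide_le_eq)
  moreover have "- cocycle g x = ln (norm v / norm (g *v v))"
    unfolding cocycle using v gv by (simp add: ln_div)
  moreover have "norm v / norm (g *v v) > 0" using v gv by simp
  ultimately show "opnorm (matrix_inv g) > 0" and "- cocycle g x \<le> ln (opnorm (matrix_inv g))"
    by simp_all
qed

lemma abs_cocycle_le_ln_Nmat: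
  fixes g :: "real^'n::finite^'n"
  assumes "invertible g"
  shows "\<bar>cocycle g x\<bar> \<le> ln (Nmat g)"
proof -
  have "ln (opnorm g) \<le> ln (Nmat g)" "ln (opnorm (matrix_inv g)) \<le> ln (Nmat g)"
    using opnorm_pos[OF assms] opnorm_matrix_inv_pos[OF assms] by (simp_all add: Nmat_def)
  then show ?thesis
    using cocycle_le_ln_opnorm[OF assms] neg_cocycle_le_ln_opnorm_matrix_inv[OF assms]
    by (auto simp: abs_le_iff intro: order_trans)
qed

lemma exp_cocycle_le_opnorm_powr:
  fixes g :: "real^'n::finite^'n"
  assumes "invertible g" "s \<ge> 0"
  shows "exp (s * cocycle g x) \<le> opnorm g powr s"
  using cocycle_le_ln_opnorm[OF assms(1)] opnorm_pos[OF assms(1)] assms(2)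
  by (simp add: powr_def mult_left_mono)

lemma exp_cocycle_le_Nmat_powr:
  fixes g :: "real^'n::finite^'n"
  assumes "invertible g" "\<bar>s\<bar> \<le> \<alpha>"
  shows "exp (s * cocycle g x) \<le> Nmat g powr \<alpha>"
proof -
  have "Nmat g > 0" using opnorm_pos[OF assms(1)] by (simp add: Nmat_def)
  have "s * cocycle g x \<le> \<bar>s\<bar> * \<bar>cocycle g x\<bar>" by (simp add: abs_mult[symmetric])
  also have "\<dots> \<le> \<alpha> * ln (Nmat g)"
    using abs_cocycle_le_ln_Nmat[OF assms(1)] assms(2) by (intro mult_mono) auto
  finally show ?thesis using \<open>Nmat g > 0\<close> by (simp add: powr_def)
qed

lemma upsilon_eq_integral_g_upsilon_qstar_if_dominated:
  fixes \<mu> :: "(real^'n::finite^'n) measure"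
  assumes "prob_space \<mu>" "sets \<mu> = sets borel" "AE g in \<mu>. invertible g" "eigen \<mu> s \<nu> \<kappa>"
    and dominated: "\<And>g x. invertible g \<Longrightarrow> exp (s * cocycle g x) \<le> w g"
    and finite: "(\<integral>\<^sup>+g. ennreal (w g) \<partial>\<mu>) < \<infinity>"
    and "\<phi> \<in> borel_measurable proj_borel" "bounded (range \<phi>)"
  shows "upsilon s \<nu> y \<phi> = (\<integral>g. g_upsilon g s \<nu> (act (transpose g) y) \<phi> * qstar s \<kappa> \<nu> g y \<partial>\<mu>)"
proof -
  define K where "K = (\<integral>\<^sup>+g. ennreal (w g) \<partial>\<mu>)"
  have measurable: "(\<lambda>g. exp (s * cocycle g x)) \<in> borel_measurable \<mu>" for x
    unfolding measurable_cong_sets[OF assms(2) refl] by measurable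
  have le_K: "(\<integral>\<^sup>+g. ennreal (exp (s * cocycle g x)) \<partial>\<mu>) \<le> K" for x
    unfolding K_def using assms(3) by (intro nn_integral_mono_AE) (auto elim!: eventually_mono intro: ennreal_leI dominated)
  interpret eigenmeasure \<mu> s \<nu> \<kappa> "enn2real K"
  proof (rule eigenmeasure.intro[OF assms(1-4)])
    fix x
    show "integrable \<mu> (\<lambda>g. exp (s * cocycle g x))"
      using le_K[of x] finite by (intro integrableI_bounded measurable) (auto simp: K_def)
    have "(\<integral>g. exp (s * cocycle g x) \<partial>\<mu>) = enn2real (\<integral>\<^sup>+g. ennreal (exp (s * cocycle g x)) \<partial>\<mu>)"
      by (rule integral_eq_nn_integral[OF measurable]) simp
    also have "\<dots> \<le> enn2real K" using le_K[of x] finite by (intro enn2real_mono) (auto simp: K_def)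
    finally show "(\<integral>g. exp (s * cocycle g x) \<partial>\<mu>) \<le> enn2real K" .
  qed
  show ?thesis using assms(7,8) by (rule upsilon_eq_integral_g_upsilon_qstar)
qed

theorem lemma3p12:
  fixes \<mu> :: "(real^'n^'n::finite) measure"
  assumes "CARD('n) \<ge> 2"
    and "prob_space \<mu>"
    and "sets \<mu> = sets borel"
    and "AE g in \<mu>. invertible g"
  shows "\<exists>s0>0. \<forall>s \<nu> \<kappa>.
           ((A1 \<mu> \<and> A2 \<mu> \<and> s \<in> I_plus \<mu>) \<or> (A1 \<mu> \<and> A2 \<mu> \<and> A3 \<mu> \<and> -s0 < s \<and> s < 0)) \<longrightarrow>
           eigen \<mu> s \<nu> \<kappa> \<longrightarrow>
           (\<forall>y \<phi>. \<phi> \<in> borel_measurable proj_borel \<longrightarrow> bounded (range \<phi>) \<longrightarrow>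
              upsilon s \<nu> y \<phi> = (\<integral>g. g_upsilon g s \<nu> (act (transpose g) y) \<phi> * qstar s \<kappa> \<nu> g y \<partial>\<mu>))"
proof -
  obtain s0 where "s0 > 0" and s0: "A3 \<mu> \<Longrightarrow> (\<integral>\<^sup>+g. ennreal (Nmat g powr s0) \<partial>\<mu>) < \<infinity>"
    by (cases "A3 \<mu>") (auto simp: A3_def intro: zero_less_one)
  show ?thesis
  proof (intro exI[of _ s0] conjI \<open>s0 > 0\<close> allI impI)
    fix s \<nu> \<kappa> y and \<phi> :: "'n proj \<Rightarrow> real"
    assume hyps: "(A1 \<mu> \<and> A2 \<mu> \<and> s \<in> I_plus \<mu>) \<or> (A1 \<mu> \<and> A2 \<mu> \<and> A3 \<mu> \<and> -s0 < s \<and> s < 0)"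
      and eigen: "eigen \<mu> s \<nu> \<kappa>"
      and \<phi>: "\<phi> \<in> borel_measurable proj_borel" "bounded (range \<phi>)"
    have dominated: "upsilon s \<nu> y \<phi> = (\<integral>g. g_upsilon g s \<nu> (act (transpose g) y) \<phi> * qstar s \<kappa> \<nu> g y \<partial>\<mu>)"
      if "\<And>g x. invertible g \<Longrightarrow> exp (s * cocycle g x) \<le> w g" "(\<integral>\<^sup>+g. ennreal (w g) \<partial>\<mu>) < \<infinity>" for w
      using upsilon_eq_integral_g_upsilon_qstar_if_dominated[OF assms(2-4) eigen that \<phi>] .
    from hyps consider "s \<in> I_plus \<mu>" | "A3 \<mu>" "\<bar>s\<bar> \<le> s0" by fastforce
    then show "upsilon s \<nu> y \<phi> = (\<integral>g. g_upsilon g s \<nu> (act (transpose g) y) \<phi> * qstar s \<kappa> \<nu> g y \<partial>\<mu>)"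
    proof cases
      case 1
      then show ?thesis
        by (intro dominated[of "\<lambda>g. opnorm g powr s"] exp_cocycle_le_opnorm_powr) (auto simp: I_plus_def)
    next
      case 2
      then show ?thesis
        by (intro dominated[of "\<lambda>g. Nmat g powr s0"] exp_cocycle_le_Nmat_powr s0)
    qed
  qed
qed

end
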